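(* Any two of the following three equalities imply the third: (i) $c_{n,k}=\prod_{j=k}^{n-1}\frac{g_{j+1}}{h_n-h_j}$ for $0\le k<n$ and $c_{n,n}=1$; (ii) $Lu_n=h_nu_n$ for all $n\ge0$; (iii) $Lv_n=h_nv_n+g_nv_{n-1}$ for $n>0$ and $Lv_0=h_0v_0$.
   Context: Let $h_k$, $x_k$, $g_k$ ($k=0,1,2,\ldots$) be given sequences such that all $h_k$ are distinct. Define monic Newton type polynomials $v_k(x)=(x-x_0)(x-x_1)\cdots(x-x_{k-1})$ for $k\ge1$ and $v_0(x)=1$. Let $u_n(x)=\sum_{k=0}^n c_{n,k}\,v_k(x)$ be monic polynomials of degree $n$ (so $c_{n,n}=1$), and let $L$ be a linear operator on the space of polynomials. *)

theory Defs
  imports "HOL-Computational_Algebra.Polynomial"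
begin

definition newton_poly :: "(nat \<Rightarrow> 'a::field) \<Rightarrow> nat \<Rightarrow> 'a poly" where
  "newton_poly x k = (\<Prod>i<k. [:- x i, 1:])"

definition u_poly :: "(nat \<Rightarrow> 'a::field) \<Rightarrow> (nat \<Rightarrow> nat \<Rightarrow> 'a) \<Rightarrow> nat \<Rightarrow> 'a poly" where
  "u_poly x c n = (\<Sum>k\<le>n. smult (c n k) (newton_poly x k))"

definition linear_poly_op :: "('a::field poly \<Rightarrow> 'a poly) \<Rightarrow> bool" where
  "linear_poly_op L \<longleftrightarrow> (\<forall>p q. L (p + q) = L p + L q) \<and> (\<forall>a p. L (smult a p) = smult a (L p))"

definition cond_i :: "(nat \<Rightarrow> 'a::field) \<Rightarrow> (nat \<Rightarrow> 'a) \<Rightarrow> (nat \<Rightarrow> nat \<Rightarrow> 'a) \<Rightarrow> bool" where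
  "cond_i h g c \<longleftrightarrow>
     (\<forall>n k. k < n \<longrightarrow> c n k = (\<Prod>j=k..<n. g (j + 1) / (h n - h j))) \<and> (\<forall>n. c n n = 1)"

definition cond_ii :: "('a::field poly \<Rightarrow> 'a poly) \<Rightarrow> (nat \<Rightarrow> 'a) \<Rightarrow> (nat \<Rightarrow> 'a) \<Rightarrow> (nat \<Rightarrow> nat \<Rightarrow> 'a) \<Rightarrow> bool" where
  "cond_ii L h x c \<longleftrightarrow> (\<forall>n. L (u_poly x c n) = smult (h n) (u_poly x c n))"

definition cond_iii :: "('a::field poly \<Rightarrow> 'a poly) \<Rightarrow> (nat \<Rightarrow> 'a) \<Rightarrow> (nat \<Rightarrow> 'a) \<Rightarrow> (nat \<Rightarrow> 'a) \<Rightarrow> bool" where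
  "cond_iii L h x g \<longleftrightarrow>
     (\<forall>n>0. L (newton_poly x n) = smult (h n) (newton_poly x n) + smult (g n) (newton_poly x (n - 1))) \<and>
     L (newton_poly x 0) = smult (h 0) (newton_poly x 0)"

end

theory Submission
  imports Defs
begin

(*
  Write D_k = L v_k - h_k v_k - g_k v_(k-1) (the last term absent for k = 0) and
  r_(n,k) = g_(k+1) c_(n,k+1) - (h_n - h_k) c_(n,k). Linearity of L and a shift of the
  summation index give, for every n,

    L u_n - h_n u_n = sum_(k<=n) c_(n,k) D_k + sum_(k<n) r_(n,k) v_k.

  Condition (ii) says the left side vanishes, (iii) says every D_k vanishes, and, as the
  h_k are distinct and c_(n,n) = 1, (i) is the unrolled form of the recurrence r_(n,k) = 0.
  Given (i) and (iii) the right side is zero. Given (i) and (ii), sum_(k<=n) c_(n,k) D_k = 0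
  is a triangular system with unit diagonal, so D_n = 0 by strong induction. Given (ii) and
  (iii), sum_(k<n) r_(n,k) v_k = 0, and the v_k are linearly independent since deg v_k = k.
*)

lemma degree_newton_poly [simp]: "degree (newton_poly x k) = k"
  by (simp add: newton_poly_def degree_prod_sum_eq)

lemma lead_coeff_newton_poly [simp]: "lead_coeff (newton_poly x k) = 1"
  by (simp add: newton_poly_def lead_coeff_prod)

lemma newton_poly_nonzero [simp]: "newton_poly x k \<noteq> 0"
  using lead_coeff_newton_poly[of x k] by (metis leading_coeff_0_iff zero_neq_one)

lemma sum_smult_degree_graded_eq_0:
  fixes p :: "nat \<Rightarrow> 'a::idom poly"
  assumes "(\<Sum>k<n. smult (a k) (p k)) = 0"
    and "\<And>k. k < n \<Longrightarrow> degree (p k) = k" and "\<And>k. k < n \<Longrightarrow> p k \<noteq> 0"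
  shows "\<forall>k<n. a k = 0"
  using assms
proof (induction n)
  case 0
  then show ?case by simp
next
  case (Suc n)
  let ?S = "\<Sum>k<n. smult (a k) (p k)"
  have "coeff ?S n = 0"
    using Suc.prems(2) by (simp add: coeff_sum coeff_eq_0)
  moreover have "?S + smult (a n) (p n) = 0"
    using Suc.prems(1) by simp
  then have "coeff ?S n + a n * lead_coeff (p n) = 0"
    using Suc.prems(2) by (metis coeff_add coeff_smult coeff_0 lessI)
  ultimately have "a n = 0"
    using Suc.prems(3) by simp
  with Suc show ?case
    by (simp add: less_Suc_eq)
qed

lemma linear_poly_op_sum:
  assumes "linear_poly_op L"
  shows "L (\<Sum>k\<in>A. smult (a k) (p k)) = (\<Sum>k\<in>A. smult (a k) (L (p k)))"
proof -
  have "L 0 = 0"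
    using assms unfolding linear_poly_op_def by (metis smult_0_left)
  then have "L (\<Sum>k\<in>A. smult (a k) (p k)) = (\<Sum>k\<in>A. L (smult (a k) (p k)))"
    using assms sum_comp_morphism[of L] unfolding linear_poly_op_def comp_def by metis
  also have "\<dots> = (\<Sum>k\<in>A. smult (a k) (L (p k)))"
    using assms unfolding linear_poly_op_def by simp
  finally show ?thesis .
qed

lemma smult_sum_right: "smult a (\<Sum>k\<in>A. p k) = (\<Sum>k\<in>A. smult a (p k))"
  by (induction A rule: infinite_finite_induct) (simp_all add: smult_add_right)

fun newton_lower :: "(nat \<Rightarrow> 'a::field) \<Rightarrow> (nat \<Rightarrow> 'a) \<Rightarrow> nat \<Rightarrow> 'a poly" where
  "newton_lower x g 0 = 0"
| "newton_lower x g (Suc k) = smult (g (Suc k)) (newton_poly x k)"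

definition newton_defect ::
    "('a::field poly \<Rightarrow> 'a poly) \<Rightarrow> (nat \<Rightarrow> 'a) \<Rightarrow> (nat \<Rightarrow> 'a) \<Rightarrow> (nat \<Rightarrow> 'a) \<Rightarrow> nat \<Rightarrow> 'a poly" where
  "newton_defect L h x g k =
     L (newton_poly x k) - smult (h k) (newton_poly x k) - newton_lower x g k"

definition recurrence_defect ::
    "(nat \<Rightarrow> 'a::field) \<Rightarrow> (nat \<Rightarrow> 'a) \<Rightarrow> (nat \<Rightarrow> nat \<Rightarrow> 'a) \<Rightarrow> nat \<Rightarrow> nat \<Rightarrow> 'a" where
  "recurrence_defect h g c n k = g (Suc k) * c n (Suc k) - c n k * (h n - h k)"

definition coeff_recurrence :: "(nat \<Rightarrow> 'a::field) \<Rightarrow> (nat \<Rightarrow> 'a) \<Rightarrow> (nat \<Rightarrow> nat \<Rightarrow> 'a) \<Rightarrow> bool" where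
  "coeff_recurrence h g c \<longleftrightarrow> (\<forall>n k. k < n \<longrightarrow> recurrence_defect h g c n k = 0)"

lemma newton_lower_pos: "0 < n \<Longrightarrow> newton_lower x g n = smult (g n) (newton_poly x (n - 1))"
  by (cases n) simp_all

lemma newton_defect_eq_0_iff:
  "newton_defect L h x g k = 0 \<longleftrightarrow>
     L (newton_poly x k) = smult (h k) (newton_poly x k) + newton_lower x g k"
  by (simp only: newton_defect_def diff_diff_eq right_minus_eq)

lemma cond_iii_iff_newton_defect:
  "cond_iii L h x g \<longleftrightarrow> (\<forall>k. newton_defect L h x g k = 0)"
proof -
  have "(\<forall>k. newton_defect L h x g k = 0) \<longleftrightarrow>
      newton_defect L h x g 0 = 0 \<and> (\<forall>n>0. newton_defect L h x g n = 0)"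
    by (metis neq0_conv)
  then show ?thesis
    unfolding cond_iii_def newton_defect_eq_0_iff by (simp add: newton_lower_pos conj_commute)
qed

lemma u_poly_eigen_defect:
  assumes "linear_poly_op L"
  shows "L (u_poly x c n) - smult (h n) (u_poly x c n) =
    (\<Sum>k\<le>n. smult (c n k) (newton_defect L h x g k)) +
    (\<Sum>k<n. smult (recurrence_defect h g c n k) (newton_poly x k))"
proof -
  let ?v = "newton_poly x" and ?w = "newton_lower x g" and ?D = "newton_defect L h x g"
  have "L (u_poly x c n) - smult (h n) (u_poly x c n) =
      (\<Sum>k\<le>n. smult (c n k) (L (?v k) - smult (h n) (?v k)))"
    unfolding u_poly_def linear_poly_op_sum[OF assms] smult_sum_right
    by (simp add: sum_subtractf smult_diff_right mult.commute)
  also have "\<dots> = (\<Sum>k\<le>n. smult (c n k) (?D k)) + (\<Sum>k\<le>n. smult (c n k) (?w k)) +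
      (\<Sum>k\<le>n. smult (c n k * (h k - h n)) (?v k))"
    unfolding sum.distrib[symmetric]
    by (intro sum.cong refl poly_eqI) (simp add: newton_defect_def algebra_simps)
  also have "(\<Sum>k\<le>n. smult (c n k) (?w k)) = (\<Sum>k<n. smult (g (Suc k) * c n (Suc k)) (?v k))"
    unfolding lessThan_Suc_atMost[symmetric] sum.lessThan_Suc_shift by (simp add: mult.commute)
  also have "(\<Sum>k\<le>n. smult (c n k * (h k - h n)) (?v k)) =
      (\<Sum>k<n. smult (c n k * (h k - h n)) (?v k))"
    by (simp add: lessThan_Suc_atMost[symmetric])
  also have "(\<Sum>k\<le>n. smult (c n k) (?D k)) + (\<Sum>k<n. smult (g (Suc k) * c n (Suc k)) (?v k)) +
      (\<Sum>k<n. smult (c n k * (h k - h n)) (?v k)) =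
      (\<Sum>k\<le>n. smult (c n k) (?D k)) + (\<Sum>k<n. smult (recurrence_defect h g c n k) (?v k))"
    unfolding add.assoc sum.distrib[symmetric] smult_add_left[symmetric] recurrence_defect_def
    by (simp add: algebra_simps)
  finally show ?thesis .
qed

lemma cond_i_iff_coeff_recurrence:
  assumes "inj h" and "\<forall>n. c n n = 1"
  shows "cond_i h g c \<longleftrightarrow> coeff_recurrence h g c"
proof -
  have step: "recurrence_defect h g c n k = 0 \<longleftrightarrow>
      c n k = g (Suc k) / (h n - h k) * c n (Suc k)" if "k < n" for n k
  proof -
    have "h n - h k \<noteq> 0"
      using \<open>inj h\<close> that by (auto dest: injD)
    then show ?thesis
      by (auto simp: recurrence_defect_def field_simps)
  qed
  have closed_form: "c n k = (\<Prod>j=k..<n. g (j + 1) / (h n - h j))"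
    if "k < n" "\<forall>k<n. recurrence_defect h g c n k = 0" for n k
    using that(1)
  proof (induction "n - k" arbitrary: k)
    case 0
    then show ?case by simp
  next
    case (Suc d)
    have "c n (Suc k) = (\<Prod>j=Suc k..<n. g (j + 1) / (h n - h j))"
      using Suc assms(2) by (cases "Suc k = n") auto
    then show ?case
      using step[of k n] that(2) Suc.prems by (simp add: prod.atLeast_Suc_lessThan)
  qed
  have "recurrence_defect h g c n k = 0" if "cond_i h g c" "k < n" for n k
  proof -
    have "c n (Suc k) = (\<Prod>j=Suc k..<n. g (j + 1) / (h n - h j))"
      using that unfolding cond_i_def by (cases "Suc k = n") auto
    then show ?thesis
      using that step[of k n] unfolding cond_i_def by (simp add: prod.atLeast_Suc_lessThan)
  qed
  with closed_form assms(2) show ?thesis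
    unfolding cond_i_def coeff_recurrence_def by blast
qed

lemma coeff_recurrence_cond_ii_imp_cond_iii:
  assumes "linear_poly_op L" and "\<forall>n. c n n = 1"
    and "coeff_recurrence h g c" and "cond_ii L h x c"
  shows "cond_iii L h x g"
  unfolding cond_iii_iff_newton_defect
proof
  fix n
  show "newton_defect L h x g n = 0"
  proof (induction n rule: less_induct)
    case (less n)
    have "(\<Sum>k\<le>n. smult (c n k) (newton_defect L h x g k)) = 0"
      using u_poly_eigen_defect[OF assms(1), of x c n h g] assms(3,4)
      by (simp add: cond_ii_def coeff_recurrence_def)
    also have "(\<Sum>k\<le>n. smult (c n k) (newton_defect L h x g k)) = newton_defect L h x g n"
      using less assms(2) by (simp add: lessThan_Suc_atMost[symmetric])
    finally show ?case .
  qed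
qed

lemma coeff_recurrence_cond_iii_imp_cond_ii:
  assumes "linear_poly_op L"
    and "coeff_recurrence h g c" and "cond_iii L h x g"
  shows "cond_ii L h x c"
  using u_poly_eigen_defect[OF assms(1), of x c _ h g] assms(2,3)
  by (simp add: cond_ii_def cond_iii_iff_newton_defect coeff_recurrence_def)

lemma cond_ii_cond_iii_imp_coeff_recurrence:
  assumes "linear_poly_op L" and "cond_ii L h x c" and "cond_iii L h x g"
  shows "coeff_recurrence h g c"
  unfolding coeff_recurrence_def
proof (rule allI)
  fix n
  have "(\<Sum>k<n. smult (recurrence_defect h g c n k) (newton_poly x k)) = 0"
    using u_poly_eigen_defect[OF assms(1), of x c n h g] assms(2,3)
    by (simp add: cond_ii_def cond_iii_iff_newton_defect)
  then show "\<forall>k<n. recurrence_defect h g c n k = 0"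
    by (rule sum_smult_degree_graded_eq_0) simp_all
qed

theorem mainTheorem1:
  fixes h x g :: "nat \<Rightarrow> 'a::field"
    and c :: "nat \<Rightarrow> nat \<Rightarrow> 'a"
    and L :: "'a poly \<Rightarrow> 'a poly"
  assumes "inj h"
    and "\<forall>n. c n n = 1"
    and "linear_poly_op L"
  shows "(cond_i h g c \<and> cond_ii L h x c \<longrightarrow> cond_iii L h x g) \<and>
         (cond_i h g c \<and> cond_iii L h x g \<longrightarrow> cond_ii L h x c) \<and>
         (cond_ii L h x c \<and> cond_iii L h x g \<longrightarrow> cond_i h g c)"
  using coeff_recurrence_cond_ii_imp_cond_iii[of L c, OF assms(3,2)]
    coeff_recurrence_cond_iii_imp_cond_ii[OF assms(3)]
    cond_ii_cond_iii_imp_coeff_recurrence[OF assms(3)]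
  unfolding cond_i_iff_coeff_recurrence[of h c, OF assms(1,2)] by blast

end
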